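(* For every $m\ge0$ and $n\ge1$ there is an injective map from $Q_2(m,n)$ to $P_2(-m,n)$.
   Context: Partitions: $\lambda_1\ge\cdots\ge\lambda_\ell>0$, $\ell(\lambda)=\ell$, $\lambda_i=0$ for $i>\ell$ (so $\alpha_1=0$ if $\alpha=\emptyset$), $s(\lambda)$ the smallest part with $s(\emptyset)=+\infty$. Rank $=\lambda_1-\ell$; rank-set $=[-\lambda_1,1-\lambda_2,\dots,\ell-1-\lambda_\ell,\ell,\ell+1,\dots]$. $Q(m,n)$: partitions of $n$ whose rank-set contains $m$; $P(-m,n)$: partitions of $n$ with rank $\ge-m$. $m$-Durfee rectangle symbol $(\alpha,\beta)_{(m+j)\times j}$ of $\lambda$: $j\ge0$ is the largest integer with $\lambda_{m+j}\ge j$; $\alpha$ is the conjugate of $(\lambda_1-j,\dots,\lambda_{m+j}-j)$ (columns to the right of the $(m+j)\times j$ rectangle) and $\beta=(\lambda_{m+j+1},\lambda_{m+j+2},\dots)$ (rows below it); $|\lambda|=|\alpha|+|\beta|+j(m+j)$. $Q_2(m,n)$ is the set of $\lambda\in Q(m,n)$ whose symbol $(\alpha,\beta)_{(m+j)\times j}$ has $j\ge1$, $\ell(\beta)\ge\ell(\alpha)$ and $\alpha_1<m+j$. $P_2(-m,n)$ is the set of $\mu\in P(-m,n)$ whose symbol $(\gamma,\delta)_{(m+j')\times j'}$ has $j'\ge1$ and $\delta_1=j'-1$. *)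

theory Defs
  imports Main
begin

definition is_partition :: "nat list \<Rightarrow> bool" where
  "is_partition xs \<longleftrightarrow> sorted_wrt (\<ge>) xs \<and> 0 \<notin> set xs"

definition partitions :: "nat \<Rightarrow> nat list set" where
  "partitions n = {xs. is_partition xs \<and> sum_list xs = n}"

text \<open>1-indexed parts, with part i = 0 for i > length (and for i = 0).\<close>
definition part :: "nat list \<Rightarrow> nat \<Rightarrow> nat" where
  "part xs i = (if 1 \<le> i \<and> i \<le> length xs then xs ! (i - 1) else 0)"

definition rank :: "nat list \<Rightarrow> int" where
  "rank xs = int (part xs 1) - int (length xs)"

definition rank_set :: "nat list \<Rightarrow> int set" where
  "rank_set xs = {int (i - 1) - int (part xs i) | i. 1 \<le> i \<and> i \<le> length xs}
                 \<union> {int k | k. length xs \<le> k}"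

definition Qset :: "nat \<Rightarrow> nat \<Rightarrow> nat list set" where
  "Qset m n = {xs \<in> partitions n. int m \<in> rank_set xs}"

text \<open>P(-m,n): partitions of n with rank at least -m.\<close>
definition Pset :: "nat \<Rightarrow> nat \<Rightarrow> nat list set" where
  "Pset m n = {xs \<in> partitions n. rank xs \<ge> - int m}"

definition conj :: "nat list \<Rightarrow> nat list" where
  "conj xs = map (\<lambda>k. length (filter (\<lambda>x. k \<le> x) xs)) [1..<Suc (fold max xs 0)]"

text \<open>m-Durfee rectangle symbol (alpha, beta) of size (m+j) x j.\<close>
definition durj :: "nat \<Rightarrow> nat list \<Rightarrow> nat" where
  "durj m xs = (GREATEST j. part xs (m + j) \<ge> j)"

definition dur_alpha :: "nat \<Rightarrow> nat list \<Rightarrow> nat list" where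
  "dur_alpha m xs = (let j = durj m xs in conj (map (\<lambda>i. part xs i - j) [1..<Suc (m + j)]))"

definition dur_beta :: "nat \<Rightarrow> nat list \<Rightarrow> nat list" where
  "dur_beta m xs = drop (m + durj m xs) xs"

definition Q2set :: "nat \<Rightarrow> nat \<Rightarrow> nat list set" where
  "Q2set m n = {xs \<in> Qset m n. durj m xs \<ge> 1
      \<and> length (dur_beta m xs) \<ge> length (dur_alpha m xs)
      \<and> part (dur_alpha m xs) 1 < m + durj m xs}"

definition P2set :: "nat \<Rightarrow> nat \<Rightarrow> nat list set" where
  "P2set m n = {xs \<in> Pset m n. durj m xs \<ge> 1
      \<and> part (dur_beta m xs) 1 = durj m xs - 1}"

end

theory Submission
  imports Defs
begin

text \<open>Let \<open>\<lambda> \<in> Q\<^sub>2(m,n)\<close> have m-Durfee rectangle of width j. Since m lies in the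
  rank-set, the row just below the rectangle has length j, and \<open>\<alpha>\<^sub>1 < m + j\<close> says the
  last row of the rectangle has length j as well; so \<open>\<lambda> = (A, j, \<beta>)\<close> with \<open>\<beta>\<^sub>1 = j\<close>,
  and \<open>\<ell>(\<beta>) \<ge> \<ell>(\<alpha>)\<close> means \<open>\<lambda>\<^sub>1 \<le> j + \<ell>(\<beta>)\<close>. Removing the row j and the first
  column of \<open>\<beta>\<close> and adding a new first row \<open>j + \<ell>(\<beta>)\<close> gives a partition
  \<open>\<mu> = (j + \<ell>(\<beta>), A, \<beta>')\<close> of n whose m-Durfee rectangle again has width j, with rank
  at least \<open>-m\<close> and with \<open>\<beta>'\<^sub>1 = j - 1\<close>. Since \<open>\<ell>(\<beta>) = \<mu>\<^sub>1 - j\<close>, the removed column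
  can be put back, so \<open>\<lambda>\<close> is recovered from \<open>\<mu>\<close>.\<close>

lemma part_antimono:
  assumes "is_partition xs" "1 \<le> i" "i \<le> i'"
  shows "part xs i' \<le> part xs i"
proof (cases "i' \<le> length xs \<and> i < i'")
  case True
  have sorted: "sorted_wrt (\<ge>) xs" using assms(1) by (simp add: is_partition_def)
  moreover have "i - 1 < i' - 1" "i' - 1 < length xs" using True assms(2) by auto
  ultimately have "xs ! (i' - 1) \<le> xs ! (i - 1)" using sorted_wrt_nth_less[OF sorted] by blast
  then show ?thesis using True assms(2) by (simp add: part_def)
next
  case False
  then show ?thesis using assms(3) by (auto simp: part_def)
qed

lemma part_le_sum_list: "part xs i \<le> sum_list xs"
  unfolding part_def by (auto intro!: elem_le_sum_list)

lemma part_drop: "1 \<le> i \<Longrightarrow> part xs (k + i) = part (drop k xs) i"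
  by (auto simp: part_def add.commute)

lemma durj_le_part: "durj m xs \<le> part xs (m + durj m xs)"
  unfolding durj_def
  by (rule GreatestI_nat[where k = 0 and b = "sum_list xs"])
     (auto intro: order_trans[OF _ part_le_sum_list])

lemma part_Suc_durj_le: "part xs (m + durj m xs + 1) \<le> durj m xs"
proof (rule ccontr)
  assume "\<not> ?thesis"
  then have "durj m xs + 1 \<le> durj m xs"
    unfolding durj_def
    by (intro Greatest_le_nat[where b = "sum_list xs"])
       (auto simp: durj_def intro: order_trans[OF _ part_le_sum_list])
  then show False by simp
qed

lemma durj_eqI:
  assumes "is_partition xs" "j \<le> part xs (m + j)" "part xs (m + j + 1) \<le> j"
  shows "durj m xs = j"
  unfolding durj_def
proof (rule Greatest_equality)
  fix i assume i: "i \<le> part xs (m + i)"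
  show "i \<le> j"
  proof (rule ccontr)
    assume "\<not> i \<le> j"
    then have "part xs (m + i) \<le> part xs (m + j + 1)"
      using part_antimono[OF assms(1), of "m + j + 1" "m + i"] by simp
    then show False using i assms(3) \<open>\<not> i \<le> j\<close> by simp
  qed
qed (fact assms(2))

lemma length_conj: "length (conj ys) = Max (insert 0 (set ys))"
  using Max.set_eq_fold[of 0 ys] by (simp add: conj_def)

lemma part_conj:
  assumes "1 \<le> k"
  shows "part (conj ys) k = length (filter (\<lambda>x. k \<le> x) ys)"
proof (cases "k \<le> length (conj ys)")
  case True
  moreover have "[1..<Suc (length (conj ys))] ! (k - 1) = k" using True assms by (simp add: nth_upt del: upt_Suc)
  ultimately show ?thesis using assms by (simp add: part_def conj_def nth_map_upt del: upt_Suc)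
next
  case False
  then have "\<forall>x\<in>set ys. x < k"
    using Max_ge[of "insert 0 (set ys)"] by (auto simp: length_conj not_le intro: le_less_trans)
  then show ?thesis using False by (auto simp: part_def filter_empty_conv)
qed

lemma length_dur_alpha:
  assumes "is_partition xs" "1 \<le> m + durj m xs"
  shows "length (dur_alpha m xs) = part xs 1 - durj m xs"
proof -
  define j where "j = durj m xs"
  define ys where "ys = map (\<lambda>i. part xs i - j) [1..<Suc (m + j)]"
  have "length (dur_alpha m xs) = Max (insert 0 (set ys))"
    by (simp add: dur_alpha_def ys_def j_def Let_def length_conj)
  also have "\<dots> = part xs 1 - j"
  proof (rule Max_eqI)
    have "part xs 1 - j \<in> set ys"
      unfolding ys_def set_map using assms(2) by (intro image_eqI[where x = 1]) (auto simp: j_def)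
    then show "part xs 1 - j \<in> insert 0 (set ys)" by simp
    show "y \<le> part xs 1 - j" if "y \<in> insert 0 (set ys)" for y
      using that part_antimono[OF assms(1), of 1] by (auto simp: ys_def intro: diff_le_mono)
  qed simp
  finally show ?thesis by (simp add: j_def)
qed

lemma part_Suc_durj_eq_durj:
  assumes "is_partition xs" "int m \<in> rank_set xs" "1 \<le> durj m xs"
  shows "part xs (m + durj m xs + 1) = durj m xs"
proof -
  let ?j = "durj m xs"
  have above: "?j \<le> part xs (m + ?j)" by (rule durj_le_part)
  have below: "part xs (m + ?j + 1) \<le> ?j" by (rule part_Suc_durj_le)
  from assms(2) consider
      (row) i where "1 \<le> i" "i \<le> length xs" "int m = int (i - 1) - int (part xs i)"
    | (tail) "length xs \<le> m"
    unfolding rank_set_def by auto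
  then show ?thesis
  proof cases
    case row
    show ?thesis
    proof (cases "i \<le> m + ?j")
      case True
      then show ?thesis using row above part_antimono[OF assms(1) row(1) True] by simp
    next
      case False
      then show ?thesis using row below part_antimono[OF assms(1), of "m + ?j + 1" i]
        by (cases "i = m + ?j + 1") auto
    qed
  next
    case tail
    then show ?thesis using above assms(3) by (simp add: part_def)
  qed
qed

lemma part_durj_eq_durj:
  assumes "is_partition xs" "part (dur_alpha m xs) 1 < m + durj m xs"
  shows "part xs (m + durj m xs) = durj m xs"
proof (rule ccontr)
  define j where "j = durj m xs"
  define ys where "ys = map (\<lambda>i. part xs i - j) [1..<Suc (m + j)]"
  assume "part xs (m + durj m xs) \<noteq> durj m xs"
  then have "j < part xs (m + j)" using durj_le_part[of m xs] by (simp add: j_def)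
  then have "\<forall>y\<in>set ys. 1 \<le> y"
    using part_antimono[OF assms(1), of _ "m + j"] by (fastforce simp: ys_def)
  moreover have "dur_alpha m xs = conj ys" by (simp add: dur_alpha_def Let_def ys_def j_def)
  ultimately have "part (dur_alpha m xs) 1 = length ys" by (simp add: part_conj)
  then show False using assms(2) by (simp add: ys_def j_def)
qed

definition drop_first_column :: "nat list \<Rightarrow> nat list" where
  "drop_first_column b = filter (\<lambda>x. 0 < x) (map (\<lambda>x. x - 1) b)"

definition add_first_column :: "nat list \<Rightarrow> nat \<Rightarrow> nat list" where
  "add_first_column d l = map Suc d @ replicate (l - length d) 1"

lemma length_drop_first_column_le: "length (drop_first_column b) \<le> length b"
  unfolding drop_first_column_def using length_filter_le by (metis length_map)

lemma set_drop_first_column: "x \<in> set (drop_first_column b) \<longleftrightarrow> 0 < x \<and> Suc x \<in> set b"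
  by (force simp: drop_first_column_def)

lemma is_partition_Cons_bounds:
  "is_partition (y # c) \<Longrightarrow> x \<in> set (y # c) \<Longrightarrow> 1 \<le> x \<and> x \<le> y"
  by (cases "x = 0") (auto simp: is_partition_def)

lemma is_partition_drop_first_column:
  assumes "is_partition b"
  shows "is_partition (drop_first_column b)"
proof -
  have "sorted_wrt (\<lambda>x y. y - 1 \<le> x - 1) b"
    using assms unfolding is_partition_def by (auto intro: sorted_wrt_mono_rel[rotated] diff_le_mono)
  then show ?thesis
    unfolding is_partition_def drop_first_column_def by (auto intro: sorted_wrt_filter simp: sorted_wrt_map)
qed

lemma sum_list_drop_first_column:
  "0 \<notin> set b \<Longrightarrow> sum_list (drop_first_column b) + length b = sum_list b"
  by (induction b) (auto simp: drop_first_column_def)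

lemma part_drop_first_column:
  assumes "is_partition b"
  shows "part (drop_first_column b) 1 = part b 1 - 1"
proof (cases b)
  case (Cons y c)
  show ?thesis
  proof (cases "2 \<le> y")
    case True
    then show ?thesis using Cons by (simp add: drop_first_column_def part_def)
  next
    case False
    then have "\<forall>x\<in>set b. x = 1" using assms Cons is_partition_Cons_bounds by fastforce
    then have "drop_first_column b = []" by (auto simp: drop_first_column_def filter_empty_conv)
    then show ?thesis using \<open>\<forall>x\<in>set b. x = 1\<close> Cons by (simp add: part_def)
  qed
qed (simp add: drop_first_column_def part_def)

lemma add_first_column_drop_first_column:
  "is_partition b \<Longrightarrow> add_first_column (drop_first_column b) (length b) = b"
proof (induction b)
  case (Cons y c)
  then have c: "is_partition c" and y: "1 \<le> y" "\<forall>x\<in>set c. x \<le> y"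
    by (auto simp: is_partition_def)
  show ?case
  proof (cases "2 \<le> y")
    case True
    then show ?thesis
      using Cons.IH[OF c] length_drop_first_column_le[of c]
      by (simp add: add_first_column_def drop_first_column_def Suc_diff_le)
  next
    case False
    then have "\<forall>x\<in>set (y # c). x = 1" using Cons.prems is_partition_Cons_bounds by fastforce
    then show ?thesis
      by (auto simp: add_first_column_def drop_first_column_def filter_empty_conv
               intro: replicate_length_same)
  qed
qed (simp add: add_first_column_def drop_first_column_def)

definition Q2_to_P2 :: "nat \<Rightarrow> nat list \<Rightarrow> nat list" where
  "Q2_to_P2 m xs = (let j = durj m xs; k = m + j; b = drop k xs in
     (j + length b) # take (k - 1) xs @ drop_first_column b)"

definition P2_to_Q2 :: "nat \<Rightarrow> nat list \<Rightarrow> nat list" where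
  "P2_to_Q2 m ys = (let j = durj m ys; k = m + j; d = drop k ys in
     take (k - 1) (tl ys) @ j # add_first_column d (hd ys - j))"

lemma Q2set_decomp:
  assumes "xs \<in> Q2set m n"
  defines "j \<equiv> durj m xs"
  obtains A b where "xs = A @ j # b" "length A + 1 = m + j" "part b 1 = j"
    "part xs 1 \<le> j + length b" "is_partition xs" "sum_list xs = n"
proof -
  let ?k = "m + j"
  have xs: "is_partition xs" "sum_list xs = n" "int m \<in> rank_set xs" and j: "1 \<le> j"
    and beta: "length (dur_alpha m xs) \<le> length (dur_beta m xs)"
    and alpha: "part (dur_alpha m xs) 1 < m + j"
    using assms by (auto simp: Q2set_def Qset_def partitions_def)
  have below: "part xs (?k + 1) = j"
    using part_Suc_durj_eq_durj[OF xs(1) xs(3)] j by (simp add: j_def)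
  then have len: "?k < length xs" using j by (simp add: part_def split: if_splits)
  have "part xs ?k = j" using part_durj_eq_durj[OF xs(1)] alpha by (simp add: j_def)
  then have "xs ! (?k - 1) = j" using j by (simp add: part_def split: if_splits)
  then have split: "xs = take (?k - 1) xs @ j # drop ?k xs"
    using id_take_nth_drop[of "?k - 1" xs] len j by simp
  have "part (drop ?k xs) 1 = j" using below part_drop[of 1 xs ?k] by simp
  moreover have "part xs 1 \<le> j + length (drop ?k xs)"
    using beta length_dur_alpha[OF xs(1)] j by (simp add: j_def dur_beta_def)
  ultimately show thesis by (intro that[OF split _ _ _ xs(1,2)]) (use len j in simp_all)
qed

lemma is_partition_Q2_to_P2:
  assumes xs: "is_partition (A @ j # b)" and head: "part (A @ j # b) 1 \<le> j + length b"
  shows "is_partition ((j + length b) # A @ drop_first_column b)"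
proof -
  have sorted: "sorted_wrt (\<ge>) (A @ j # b)" and pos: "0 \<notin> set (A @ j # b)"
    using xs by (auto simp: is_partition_def)
  have A_bounds: "j \<le> x \<and> x \<le> j + length b" if "x \<in> set A" for x
  proof -
    obtain a A' where "A = a # A'" using \<open>x \<in> set A\<close> by (cases A) auto
    then show ?thesis
      using that sorted head is_partition_Cons_bounds[of a "A' @ j # b" x] xs
      by (auto simp: sorted_wrt_append part_def)
  qed
  have "is_partition b" using xs by (auto simp: is_partition_def sorted_wrt_append)
  then have d: "is_partition (drop_first_column b)"
    by (rule is_partition_drop_first_column)
  have "x < j" if "x \<in> set (drop_first_column b)" for x
    using that sorted by (auto simp: set_drop_first_column sorted_wrt_append Suc_le_eq)
  then show ?thesis
    using A_bounds d sorted pos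
    by (fastforce simp: is_partition_def sorted_wrt_append intro: less_imp_le order_trans)
qed

lemma Q2_to_P2_shape:
  assumes xs: "is_partition (A @ j # b)" and len: "length A + 1 = m + j"
    and head_b: "part b 1 = j" and head: "part (A @ j # b) 1 \<le> j + length b"
  defines "\<mu> \<equiv> (j + length b) # A @ drop_first_column b"
  shows "\<mu> \<in> P2set m (sum_list (A @ j # b))" "P2_to_Q2 m \<mu> = A @ j # b"
proof -
  have \<mu>: "is_partition \<mu>" unfolding \<mu>_def using is_partition_Q2_to_P2[OF xs head] .
  have b: "is_partition b" using xs by (auto simp: is_partition_def sorted_wrt_append)
  have j: "1 \<le> j" using xs by (cases "j = 0") (auto simp: is_partition_def)
  have tail: "drop (m + j) \<mu> = drop_first_column b"
    unfolding \<mu>_def using len[symmetric] by simp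
  have "((j + length b) # A) ! length A \<ge> j"
    using xs by (cases A rule: rev_cases) (auto simp: is_partition_def sorted_wrt_append nth_append)
  moreover have "m + j - 1 = length A" using len by simp
  ultimately have "j \<le> part \<mu> (m + j)"
    using len by (simp add: \<mu>_def part_def nth_append flip: append_Cons)
  moreover have "part \<mu> (m + j + 1) = j - 1"
    using part_drop[of 1 \<mu> "m + j"] tail part_drop_first_column[OF b] head_b by simp
  ultimately have durj: "durj m \<mu> = j" using durj_eqI[OF \<mu>] by simp
  have "rank \<mu> \<ge> - int m"
    using length_drop_first_column_le[of b] len by (simp add: rank_def part_def \<mu>_def)
  moreover have "sum_list \<mu> = sum_list (A @ j # b)"
    using sum_list_drop_first_column[of b] b by (simp add: \<mu>_def is_partition_def)
  ultimately show "\<mu> \<in> P2set m (sum_list (A @ j # b))"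
    using \<mu> durj j tail part_drop_first_column[OF b] head_b
    by (simp add: P2set_def Pset_def partitions_def dur_beta_def)
  show "P2_to_Q2 m \<mu> = A @ j # b"
    using durj tail len add_first_column_drop_first_column[OF b]
    by (simp add: P2_to_Q2_def Let_def \<mu>_def)
qed

lemma Q2_to_P2_correct:
  assumes "xs \<in> Q2set m n"
  shows "Q2_to_P2 m xs \<in> P2set m n" "P2_to_Q2 m (Q2_to_P2 m xs) = xs"
proof -
  define j where "j = durj m xs"
  obtain A b where xs: "xs = A @ j # b" and len: "length A + 1 = m + j"
    and "part b 1 = j" "part xs 1 \<le> j + length b" "is_partition xs" "sum_list xs = n"
    using Q2set_decomp[OF assms] unfolding j_def .
  moreover have "take (m + j - 1) xs = A" "drop (m + j) xs = b"
    using xs len[symmetric] by simp_all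
  then have "Q2_to_P2 m xs = (j + length b) # A @ drop_first_column b"
    by (simp add: Q2_to_P2_def Let_def j_def [symmetric] del: length_drop)
  ultimately show "Q2_to_P2 m xs \<in> P2set m n" "P2_to_Q2 m (Q2_to_P2 m xs) = xs"
    using Q2_to_P2_shape[of A j b m] by simp_all
qed

theorem lemma4p2:
  fixes m n :: nat
  assumes "n \<ge> 1"
  shows "\<exists>f. inj_on f (Q2set m n) \<and> f ` Q2set m n \<subseteq> P2set m n"
proof (intro exI conjI)
  show "inj_on (Q2_to_P2 m) (Q2set m n)"
    by (rule inj_on_inverseI[where g = "P2_to_Q2 m"]) (rule Q2_to_P2_correct)
  show "Q2_to_P2 m ` Q2set m n \<subseteq> P2set m n"
    using Q2_to_P2_correct(1) by blast
qed

end
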